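(* Let $A$ be an $\mathbb{F}_p$-algebra, $\delta=(\delta_1,\ldots,\delta_n)$ an $n$-tuple of pairwise commuting derivations of $A$, $d_\nu\in\mathbb{N}\cup\{\infty\}$, and let $\{x_\nu^{[p^{k}]}\mid \nu=1,\ldots,n;\ k\in\mathbb{N},\ k<d_\nu\}$ be pairwise commuting elements of $A$. Put $x_\nu^{[0]}=1$, and for $0\le i<p^{d_\nu}$ written $i=\sum_ki_kp^k$ ($0\le i_k<p$) put $x_\nu^{[i]}=\prod_k\frac{(x_\nu^{[p^k]})^{i_k}}{i_k!}$; for $\alpha\in I=\{\alpha\in\mathbb{N}^n\mid\alpha_\nu<p^{d_\nu}\}$ put $x^{[\alpha]}=\prod_{\nu=1}^nx_\nu^{[\alpha_\nu]}$. Then $\{x^{[\alpha]}\mid\alpha\in I\}$ is an iterative $\delta$-descent if and only if $\delta_\nu(x_\mu^{[p^{k}]})=\delta_{\nu,\mu}x_\mu^{[p^{k}-1]}$ and $(x_\mu^{[p^{k}]})^p=0$ for all $\nu,\mu=1,\ldots,n$ and $k\in\mathbb{N}$ with $k<d_\mu$ ($\delta_{\nu,\mu}$ the Kronecker delta).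
   Context: A family $\{y^{[\alpha]}\mid\alpha\in I\}$ is an iterative $\delta$-descent if $y^{[0]}=1$, $y^{[\alpha]}y^{[\beta]}=\binom{\alpha+\beta}{\beta}y^{[\alpha+\beta]}$ for all $\alpha,\beta\in I$ ($\binom{\alpha+\beta}{\beta}=\prod_i\binom{\alpha_i+\beta_i}{\beta_i}$ in $\mathbb{F}_p$; right side $0$ when $\alpha+\beta\notin I$), and $\delta_1^{\alpha_1}\cdots\delta_n^{\alpha_n}(y^{[\beta]})=y^{[\beta-\alpha]}$ for all $\alpha\in\mathbb{N}^n$, $\beta\in I$, with $y^{[\gamma]}=0$ for $\gamma\notin\mathbb{N}^n$. *)

theory Defs
  imports Main "HOL-Library.Extended_Nat" "HOL-Computational_Algebra.Primes"
begin

text \<open>An F_p-algebra is modelled as a (not necessarily commutative) unital ring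
  'a :: ring_1 in which of_nat p = 0 for a prime p.\<close>

definition derivation :: "('a::ring_1 \<Rightarrow> 'a) \<Rightarrow> bool" where
  "derivation D \<longleftrightarrow> (\<forall>a b. D (a + b) = D a + D b) \<and> (\<forall>a b. D (a * b) = D a * b + a * D b)"

definition fp_inv :: "nat \<Rightarrow> nat \<Rightarrow> nat" where
  "fp_inv p m = (SOME c. (m * c) mod p = 1 mod p)"

text \<open>y^j / j! in an F_p-algebra (j < p).\<close>
definition divpow :: "nat \<Rightarrow> 'a::ring_1 \<Rightarrow> nat \<Rightarrow> 'a" where
  "divpow p y j = of_nat (fp_inv p (fact j)) * y ^ j"

definition digit :: "nat \<Rightarrow> nat \<Rightarrow> nat \<Rightarrow> nat" where
  "digit p i k = (i div p ^ k) mod p"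

text \<open>x^[i] = prod_k (x^[p^k])^(i_k) / i_k!, where g k stands for x^[p^k].
  Digits with k >= i vanish (p >= 2), so the product over k < i suffices.\<close>
definition dp_elem :: "nat \<Rightarrow> (nat \<Rightarrow> 'a::ring_1) \<Rightarrow> nat \<Rightarrow> 'a" where
  "dp_elem p g i = prod_list (map (\<lambda>k. divpow p (g k) (digit p i k)) [0..<i])"

text \<open>x^[alpha] = prod_{nu<n} x_nu^[alpha_nu] (indices nu = 0..n-1).\<close>
definition dp_multi :: "nat \<Rightarrow> nat \<Rightarrow> (nat \<Rightarrow> nat \<Rightarrow> 'a::ring_1) \<Rightarrow> (nat \<Rightarrow> nat) \<Rightarrow> 'a" where
  "dp_multi p n g \<alpha> = prod_list (map (\<lambda>\<nu>. dp_elem p (g \<nu>) (\<alpha> \<nu>)) [0..<n])"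

definition below_pow :: "nat \<Rightarrow> enat \<Rightarrow> nat \<Rightarrow> bool" where
  "below_pow p d i = (case d of enat m \<Rightarrow> i < p ^ m | \<infinity> \<Rightarrow> True)"

definition multi_idx :: "nat \<Rightarrow> (nat \<Rightarrow> nat) set" where
  "multi_idx n = {\<alpha>. \<forall>\<nu>. n \<le> \<nu> \<longrightarrow> \<alpha> \<nu> = 0}"

definition index_set :: "nat \<Rightarrow> nat \<Rightarrow> (nat \<Rightarrow> enat) \<Rightarrow> (nat \<Rightarrow> nat) set" where
  "index_set p n d = {\<alpha> \<in> multi_idx n. \<forall>\<nu><n. below_pow p (d \<nu>) (\<alpha> \<nu>)}"

definition multi_iter :: "nat \<Rightarrow> (nat \<Rightarrow> 'a \<Rightarrow> 'a) \<Rightarrow> (nat \<Rightarrow> nat) \<Rightarrow> 'a \<Rightarrow> 'a" where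
  "multi_iter n \<delta> \<alpha> = foldr (\<lambda>\<nu> f. (\<delta> \<nu> ^^ \<alpha> \<nu>) \<circ> f) [0..<n] id"

definition iterative_descent ::
  "nat \<Rightarrow> (nat \<Rightarrow> nat) set \<Rightarrow> (nat \<Rightarrow> 'a::ring_1 \<Rightarrow> 'a) \<Rightarrow> ((nat \<Rightarrow> nat) \<Rightarrow> 'a) \<Rightarrow> bool" where
  "iterative_descent n I \<delta> y \<longleftrightarrow>
     y (\<lambda>_. 0) = 1 \<and>
     (\<forall>\<alpha>\<in>I. \<forall>\<beta>\<in>I. y \<alpha> * y \<beta> =
        of_nat (\<Prod>\<nu><n. (\<alpha> \<nu> + \<beta> \<nu>) choose \<beta> \<nu>) *
        (if (\<lambda>\<nu>. \<alpha> \<nu> + \<beta> \<nu>) \<in> I then y (\<lambda>\<nu>. \<alpha> \<nu> + \<beta> \<nu>) else 0)) \<and>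
     (\<forall>\<alpha>\<in>multi_idx n. \<forall>\<beta>\<in>I. multi_iter n \<delta> \<alpha> (y \<beta>) =
        (if \<forall>\<nu><n. \<alpha> \<nu> \<le> \<beta> \<nu> then y (\<lambda>\<nu>. \<beta> \<nu> - \<alpha> \<nu>) else 0))"

end

theory Submission
  imports Defs "HOL-Number_Theory.Cong"
begin

text \<open>
  For a single variable, x^[i] x^[j] = (i+j choose j) x^[i+j] then
  reduces digit by digit to y^a/a! y^b/b! = (a+b choose b) y^(a+b)/(a+b)!: without a carry in
  the lowest digit this is Lucas' congruence, and with a carry both sides vanish, the left one
  because y^p = 0. The rule delta x^[i] = x^[i-1] is proved by induction on the number of
  digits: lowering the top digit borrows delta x^[p^N] = x^[p^N - 1], and when a lower digit r
  is nonzero the extra term contains x^[r] x^[p^N - 1] = 0. Conversely, the descent axioms at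
  unit indices give the rule for the derivations on the generators, and
  x^[p^k] x^[(p-1) p^k] = (p^(k+1) choose p^k) x^[p^(k+1)] = 0 is a unit multiple of (x^[p^k])^p.
\<close>

section \<open>Binomial coefficients modulo a prime\<close>

lemma binomial_0_left: "0 choose j = (if j = 0 then 1 else 0)"
  by (cases j) auto

lemma binomial_prime_cong:
  assumes "prime p"
  shows "[p choose j = (if j = 0 \<or> j = p then 1 else 0)] (mod p)"
proof (cases "j = 0 \<or> j = p")
  case False
  show ?thesis
  proof (cases "j < p")
    case True
    then have "p dvd (p choose j)" using False assms by (intro dvd_choose_prime) auto
    then show ?thesis using False by (simp add: cong_0_iff)
  qed (use False in \<open>simp add: binomial_eq_0\<close>)
qed auto

lemma binomial_add_prime_cong:
  assumes "prime p"
  shows "[(m + p) choose j = (m choose j) + (if p \<le> j then m choose (j - p) else 0)] (mod p)"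
proof (induction m arbitrary: j)
  case 0
  then show ?case using binomial_prime_cong[OF assms, of j] prime_gt_0_nat[OF assms]
    by (cases "j = 0") (auto simp: binomial_0_left)
next
  case (Suc m)
  show ?case
  proof (cases j)
    case (Suc j')
    have "(Suc m + p) choose j = ((m + p) choose j') + ((m + p) choose Suc j')"
      using Suc by simp
    also have "[\<dots> = ((m choose j') + (if p \<le> j' then m choose (j' - p) else 0))
       + ((m choose Suc j') + (if p \<le> Suc j' then m choose (Suc j' - p) else 0))] (mod p)"
      by (intro cong_add Suc.IH)
    also have "((m choose j') + (if p \<le> j' then m choose (j' - p) else 0))
       + ((m choose Suc j') + (if p \<le> Suc j' then m choose (Suc j' - p) else 0))
      = (Suc m choose j) + (if p \<le> j then Suc m choose (j - p) else 0)"
    proof -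
      consider "p \<le> j'" | "Suc j' = p" | "Suc j' < p" by linarith
      then show ?thesis
      proof cases
        case 2
        have "Suc m choose j = (m choose j') + (m choose Suc j')" using Suc by simp
        then show ?thesis using 2 Suc by simp
      qed (use Suc in \<open>simp_all add: Suc_diff_le\<close>)
    qed
    finally show ?thesis .
  qed (use prime_gt_0_nat[OF assms] in simp)
qed

lemma binomial_mult_prime_cong:
  assumes "prime p"
  shows "[(p * a) choose j = (if p dvd j then a choose (j div p) else 0)] (mod p)"
proof (induction a arbitrary: j)
  case 0
  then show ?case by (cases "j = 0") (auto simp: binomial_0_left)
next
  case (Suc a)
  have p0: "p > 0" using assms prime_gt_0_nat by blast
  have "(p * Suc a) choose j = (p * a + p) choose j" by (simp add: algebra_simps)
  also have "[\<dots> = ((p * a) choose j) + (if p \<le> j then (p * a) choose (j - p) else 0)] (mod p)"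
    by (rule binomial_add_prime_cong[OF assms])
  also have "[((p * a) choose j) + (if p \<le> j then (p * a) choose (j - p) else 0) =
     (if p dvd j then a choose (j div p) else 0) +
     (if p \<le> j then (if p dvd (j - p) then a choose ((j - p) div p) else 0) else 0)] (mod p)"
    by (intro cong_add Suc.IH) (auto simp: Suc.IH)
  also have "(if p dvd j then a choose (j div p) else 0) +
     (if p \<le> j then (if p dvd (j - p) then a choose ((j - p) div p) else 0) else 0)
     = (if p dvd j then Suc a choose (j div p) else 0)"
  proof (cases "p dvd j")
    case True
    then obtain c where c: "j = p * c" by blast
    show ?thesis
    proof (cases c)
      case (Suc c')
      have "j - p = p * c'" using c Suc by (simp add: algebra_simps)
      then show ?thesis using c Suc p0 by simp
    qed (use c p0 in simp)
  next
    case False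
    then have "\<not> p dvd (j - p)" if "p \<le> j"
      using that by (metis dvd_refl le_add_diff_inverse2 dvd_add)
    then show ?thesis using False by auto
  qed
  finally show ?case .
qed

lemma lucas_cong:
  assumes "prime p" "r < p" "s < p"
  shows "[(p * a + r) choose (p * b + s) = (a choose b) * (r choose s)] (mod p)"
  using assms(2,3)
proof (induction r arbitrary: b s)
  case 0
  have "[(p * a) choose (p * b + s) = (if p dvd (p * b + s) then a choose ((p * b + s) div p) else 0)] (mod p)"
    by (rule binomial_mult_prime_cong[OF assms(1)])
  moreover have "p dvd (p * b + s) \<longleftrightarrow> s = 0" using 0 by (auto simp: dvd_add_right_iff)
  ultimately show ?case using 0 by (cases s) auto
next
  case (Suc r)
  have p0: "p > 0" using assms prime_gt_0_nat by blast
  show ?case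
  proof (cases s)
    case 0
    show ?thesis
    proof (cases b)
      case (Suc b')
      have e: "p * b + s = Suc (p * b' + (p - 1))" and e': "Suc (p * b' + (p - 1)) = p * Suc b' + 0"
        using Suc \<open>s = 0\<close> p0 by (simp_all add: algebra_simps)
      have "(p * a + Suc r) choose (p * b + s) =
          ((p * a + r) choose (p * b' + (p - 1))) + ((p * a + r) choose (p * Suc b' + 0))"
        unfolding e add_Suc_right binomial_Suc_Suc by (simp only: e')
      also have "[\<dots> = (a choose b') * (r choose (p - 1)) + (a choose Suc b') * (r choose 0)] (mod p)"
        using Suc.prems p0 by (intro cong_add Suc.IH) auto
      also have "(a choose b') * (r choose (p - 1)) + (a choose Suc b') * (r choose 0) =
          (a choose b) * (Suc r choose s)"
        using Suc.prems Suc \<open>s = 0\<close> by (simp add: binomial_eq_0)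
      finally show ?thesis .
    qed (use \<open>s = 0\<close> in simp)
  next
    case (Suc s')
    have "(p * a + Suc r) choose (p * b + s) =
        ((p * a + r) choose (p * b + s')) + ((p * a + r) choose (p * b + Suc s'))"
      using Suc by simp
    also have "[\<dots> = (a choose b) * (r choose s') + (a choose b) * (r choose Suc s')] (mod p)"
      using Suc.prems Suc by (intro cong_add Suc.IH) auto
    also have "(a choose b) * (r choose s') + (a choose b) * (r choose Suc s') =
        (a choose b) * (Suc r choose s)"
      using Suc by (simp add: algebra_simps)
    finally show ?thesis .
  qed
qed

lemma binomial_add_digits_cong:
  assumes "prime p" "r < p" "s < p"
  shows "[(p * a + r + (p * b + s)) choose (p * b + s) =
    (if r + s < p then ((a + b) choose b) * ((r + s) choose s) else 0)] (mod p)"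
proof (cases "r + s < p")
  case True
  have "p * a + r + (p * b + s) = p * (a + b) + (r + s)" by (simp add: algebra_simps)
  then show ?thesis using lucas_cong[OF assms(1) True assms(3), of "a + b" b] True by (simp only:) simp
next
  case False
  have "p * a + r + (p * b + s) = p * (a + b + 1) + (r + s - p)" using False by (simp add: algebra_simps)
  moreover have "(r + s - p) choose s = 0" using assms(2) False by simp
  moreover have "r + s - p < p" using assms(2,3) by simp
  ultimately show ?thesis
    using lucas_cong[OF assms(1) _ assms(3), of "r + s - p" "a + b + 1" b] False by (simp only:) simp
qed

lemma prime_dvd_binomial_prime_power:
  assumes "prime p"
  shows "p dvd ((p ^ Suc k) choose ((p - 1) * p ^ k))"
proof -
  have p0: "p > 0" using assms prime_gt_0_nat by blast
  have "(p - 1) * p ^ k = p ^ Suc k - p ^ k" using p0 by (simp add: algebra_simps)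
  then have "(p ^ Suc k) choose ((p - 1) * p ^ k) = (p ^ Suc k) choose (p ^ k)"
    using p0 by (simp add: binomial_symmetric[symmetric])
  moreover have "p ^ k * ((p ^ Suc k) choose (p ^ k)) = p ^ k * (p * ((p ^ Suc k - 1) choose (p ^ k - 1)))"
    using times_binomial_minus1_eq[of "p ^ k" "p ^ Suc k"] p0 by (simp add: ac_simps)
  ultimately show ?thesis using p0 by simp
qed

lemma fp_inv_cong:
  assumes "prime p" "\<not> p dvd m"
  shows "[m * fp_inv p m = 1] (mod p)"
proof -
  have "coprime m p" using prime_imp_coprime[OF assms] by (simp add: ac_simps)
  then obtain c where "[m * c = Suc 0] (mod p)" using cong_solve_coprime_nat by blast
  then have "\<exists>c. (m * c) mod p = 1 mod p" by (auto simp: cong_def)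
  then have "(m * fp_inv p m) mod p = 1 mod p" unfolding fp_inv_def by (rule someI_ex)
  then show ?thesis by (simp add: cong_def)
qed

lemma fp_inv_fact_cong:
  assumes "prime p" "j < p"
  shows "[fact j * fp_inv p (fact j) = 1] (mod p)"
  using assms by (intro fp_inv_cong) (auto simp: prime_dvd_fact_iff)

lemma coprime_fact_prime:
  assumes "prime p" "j < p"
  shows "coprime (fact j :: nat) p"
  using prime_imp_coprime[OF assms(1), of "fact j"] assms by (simp add: prime_dvd_fact_iff coprime_commute)

lemma fp_inv_fact_add_cong:
  assumes "prime p" "a + b < p"
  shows "[fp_inv p (fact a) * fp_inv p (fact b) = ((a + b) choose b) * fp_inv p (fact (a + b))] (mod p)"
proof -
  let ?A = "fp_inv p (fact a)" and ?B = "fp_inv p (fact b)" and ?C = "fp_inv p (fact (a + b))"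
  let ?k = "(a + b) choose b"
  have fact_sum: "(fact (a + b) :: nat) = fact b * fact a * ?k"
    using binomial_fact_lemma[of b "a + b"] by simp
  have "[?A * ?B * fact (a + b) = ?k * ((fact a * ?A) * (fact b * ?B))] (mod p)"
    by (simp add: fact_sum ac_simps)
  also have "[?k * ((fact a * ?A) * (fact b * ?B)) = ?k * (1 * 1)] (mod p)"
    using assms by (intro cong_mult cong_refl fp_inv_fact_cong) auto
  also have "[?k * (1 * 1) = ?k * ?C * fact (a + b)] (mod p)"
    using cong_mult[OF cong_refl[of ?k] cong_sym[OF fp_inv_fact_cong[OF assms]]]
    by (simp add: ac_simps)
  finally show ?thesis using cong_mult_rcancel_nat[OF coprime_fact_prime[OF assms]] by blast
qed

lemma fp_inv_fact_mult_cong: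
  assumes "prime p" "0 < q" "q < p"
  shows "[fp_inv p (fact q) * q = fp_inv p (fact (q - 1))] (mod p)"
proof -
  have fact_q: "(fact q :: nat) = q * fact (q - 1)"
    using fact_reduce[OF assms(2), where 'a=nat] by simp
  have "[fp_inv p (fact q) * q * fact (q - 1) = fact q * fp_inv p (fact q)] (mod p)"
    by (simp add: fact_q ac_simps)
  also have "[fact q * fp_inv p (fact q) = 1] (mod p)" using fp_inv_fact_cong[OF assms(1,3)] .
  also have "[1 = fp_inv p (fact (q - 1)) * fact (q - 1)] (mod p)"
    using fp_inv_fact_cong[OF assms(1), of "q - 1"] assms by (auto simp: cong_sym ac_simps)
  finally show ?thesis
    using cong_mult_rcancel_nat[OF coprime_fact_prime[OF assms(1)]] assms by auto
qed

lemma of_nat_cong_char: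
  assumes "of_nat p = (0::'a::ring_1)" "[x = y] (mod p)"
  shows "(of_nat x :: 'a) = of_nat y"
proof -
  have "(of_nat x :: 'a) = of_nat (x mod p)" for x
    using assms(1) of_nat_add[of "x mod p" "p * (x div p)", where 'a='a] by simp
  then show ?thesis using assms(2) by (metis cong_def)
qed

section \<open>Derivations and products in a noncommutative ring\<close>

lemma derivation_add: "derivation D \<Longrightarrow> D (a + b) = D a + D b"
  by (simp add: derivation_def)

lemma derivation_mult: "derivation D \<Longrightarrow> D (a * b) = D a * b + a * D b"
  by (simp add: derivation_def)

lemma derivation_0: "derivation D \<Longrightarrow> D 0 = 0"
  using derivation_add[of D 0 0] by simp

lemma derivation_1: "derivation D \<Longrightarrow> D 1 = 0"
  using derivation_mult[of D 1 1] by simp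

lemma derivation_of_nat: "derivation D \<Longrightarrow> D (of_nat c) = 0"
  by (induction c) (simp_all add: derivation_0 derivation_1 derivation_add)

lemma derivation_funpow_0: "derivation D \<Longrightarrow> (D ^^ m) 0 = 0"
  by (induction m) (simp_all add: derivation_0)

lemma derivation_power_eq_0: "derivation D \<Longrightarrow> D y = 0 \<Longrightarrow> D (y ^ q) = 0"
  by (induction q) (simp_all add: derivation_1 derivation_mult)

lemma derivation_power:
  assumes D: "derivation D" and c: "y * D y = D y * y"
  shows "D (y ^ Suc q) = of_nat (Suc q) * y ^ q * D y"
proof (induction q)
  case 0
  then show ?case using D by (simp add: derivation_mult derivation_1)
next
  case (Suc q)
  have "D (y ^ Suc (Suc q)) = D y * y ^ Suc q + y * (of_nat (Suc q) * y ^ q * D y)"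
    using Suc D by (simp add: derivation_mult)
  also have "\<dots> = y ^ Suc q * D y + of_nat (Suc q) * (y * y ^ q) * D y"
  proof -
    have "y * (of_nat (Suc q) * y ^ q * D y) = of_nat (Suc q) * (y * y ^ q) * D y"
      by (metis mult.assoc mult_of_nat_commute)
    then show ?thesis using power_commuting_commutes[OF c, of "Suc q"] by simp
  qed
  also have "\<dots> = of_nat (Suc (Suc q)) * y ^ Suc q * D y"
    by (simp add: algebra_simps)
  finally show ?case .
qed

lemma derivation_prod_list_eq_0:
  "derivation D \<Longrightarrow> (\<forall>x\<in>set xs. D x = 0) \<Longrightarrow> D (prod_list xs) = 0"
  by (induction xs) (simp_all add: derivation_1 derivation_mult)

lemma derivation_prod_list_single:
  assumes D: "derivation D" and "distinct L" "\<nu> \<in> set L"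
    and "\<forall>\<mu>\<in>set L. \<mu> \<noteq> \<nu> \<longrightarrow> D (f \<mu>) = 0"
  shows "D (prod_list (map f L)) = prod_list (map (\<lambda>\<mu>. if \<mu> = \<nu> then D (f \<nu>) else f \<mu>) L)"
  using assms(2-)
proof (induction L)
  case (Cons a L)
  show ?case
  proof (cases "a = \<nu>")
    case True
    then have "\<nu> \<notin> set L" using Cons.prems by simp
    then have "D (prod_list (map f L)) = 0"
      and "prod_list (map (\<lambda>a. if a = \<nu> then D (f \<nu>) else f a) L) = prod_list (map f L)"
      using Cons.prems by (auto intro!: derivation_prod_list_eq_0[OF D] arg_cong[where f=prod_list])
    then show ?thesis using True D by (simp add: derivation_mult)
  next
    case False
    then show ?thesis using Cons D by (simp add: derivation_mult)
  qed
qed simp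

lemma commute_prod_list:
  "(\<forall>y\<in>set ys. x * y = y * x) \<Longrightarrow> x * prod_list ys = prod_list ys * x"
proof (induction ys)
  case (Cons a ys)
  have "x * prod_list (a # ys) = (x * a) * prod_list ys" by (simp add: mult.assoc)
  also have "\<dots> = a * (x * prod_list ys)" using Cons by (simp add: mult.assoc)
  also have "\<dots> = prod_list (a # ys) * x" using Cons by (simp add: mult.assoc)
  finally show ?case .
qed simp

lemma prod_list_map_mult:
  assumes "\<forall>x\<in>set L. \<forall>y\<in>set L. f x * h y = h y * f x"
  shows "prod_list (map f L) * prod_list (map h L) = prod_list (map (\<lambda>x. f x * h x) L)"
  using assms
proof (induction L)
  case (Cons a L)
  have "h a * prod_list (map f L) = prod_list (map f L) * h a"
    using Cons.prems by (intro commute_prod_list) (auto simp: eq_commute)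
  then have "prod_list (map f (a # L)) * prod_list (map h (a # L)) =
      (f a * h a) * (prod_list (map f L) * prod_list (map h L))"
    by (metis list.simps(9) mult.assoc prod_list.Cons)
  then show ?case using Cons by simp
qed simp

lemma prod_list_map_of_nat_mult:
  "prod_list (map (\<lambda>x. of_nat (c x) * (z x :: 'a::ring_1)) L) =
    of_nat (prod_list (map c L)) * prod_list (map z L)"
proof (induction L)
  case (Cons a L)
  have "of_nat (c a) * z a * (of_nat (prod_list (map c L)) * prod_list (map z L)) =
        of_nat (c a) * of_nat (prod_list (map c L)) * (z a * prod_list (map z L))"
    by (metis mult.assoc mult_of_nat_commute)
  then show ?case using Cons by simp
qed simp

lemma prod_list_map_if_0:
  "prod_list (map (\<lambda>x. if P x then w x else (0::'a::ring_1)) L) =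
    (if \<forall>x\<in>set L. P x then prod_list (map w L) else 0)"
  by (induction L) auto

lemma prod_lessThan_eq_prod_list: "(\<Prod>\<nu><n. c \<nu>) = prod_list (map c [0..<n])"
  by (metis atLeast0LessThan distinct_upt prod.distinct_set_conv_list set_upt)

lemma prod_list_0: "(0::'a::ring_1) \<in> set xs \<Longrightarrow> prod_list xs = 0"
  by (induction xs) auto

lemma prod_list_map_single:
  assumes "distinct L" "\<mu> \<in> set L" "\<forall>x\<in>set L. x \<noteq> \<mu> \<longrightarrow> f x = (1::'a::monoid_mult)"
  shows "prod_list (map f L) = f \<mu>"
  using assms
proof (induction L)
  case (Cons a L)
  show ?case
  proof (cases "a = \<mu>")
    case True
    then have "prod_list (map f L) = 1" using Cons.prems by (induction L) auto
    then show ?thesis using True by simp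
  qed (use Cons in simp)
qed simp

lemma commute_divpow: "x * y = y * x \<Longrightarrow> x * divpow p y j = divpow p y j * x"
  unfolding divpow_def by (metis mult.assoc mult_of_nat_commute power_commuting_commutes)

lemma derivation_divpow_eq_0: "derivation D \<Longrightarrow> D y = 0 \<Longrightarrow> D (divpow p y j) = 0"
  by (simp add: divpow_def derivation_mult derivation_of_nat derivation_power_eq_0)

lemma divpow_mult_divpow:
  "divpow p y a * divpow p y b = of_nat (fp_inv p (fact a) * fp_inv p (fact b)) * y ^ (a + b)"
proof -
  have "divpow p y a * divpow p y b =
      of_nat (fp_inv p (fact a)) * of_nat (fp_inv p (fact b)) * (y ^ a * y ^ b)"
    unfolding divpow_def by (metis mult.assoc mult_of_nat_commute)
  then show ?thesis by (simp add: power_add)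
qed

section \<open>Products of digit-wise divided powers\<close>

text \<open>dp_elem multiplies over the digits below i, a range that depends on i; fixing the
  number N of digits instead allows induction on N.\<close>

definition dp_trunc :: "nat \<Rightarrow> nat \<Rightarrow> (nat \<Rightarrow> 'a::ring_1) \<Rightarrow> nat \<Rightarrow> 'a" where
  "dp_trunc p N g i = prod_list (map (\<lambda>k. divpow p (g k) (digit p i k)) [0..<N])"

lemma digit_Suc: "digit p i (Suc k) = digit p (i div p) k"
  unfolding digit_def by (simp add: div_mult2_eq)

lemma digit_mod_power:
  assumes "k < N" "p > 0"
  shows "digit p (i mod p ^ N) k = digit p i k"
proof -
  have pN: "p ^ N = p ^ k * p ^ (N - k)" using assms by (simp flip: power_add)
  have "i mod p ^ N = p ^ k * (i div p ^ k mod p ^ (N - k)) + i mod p ^ k"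
    unfolding pN by (rule mod_mult2_eq)
  then have "(i mod p ^ N) div p ^ k = i div p ^ k mod p ^ (N - k)"
    using assms by simp
  moreover have "p dvd p ^ (N - k)" using assms by simp
  ultimately show ?thesis unfolding digit_def by (simp add: mod_mod_cancel)
qed

lemma dp_trunc_0 [simp]: "dp_trunc p 0 g i = 1"
  by (simp add: dp_trunc_def)

lemma dp_trunc_Suc_lowest:
  "dp_trunc p (Suc N) g i = divpow p (g 0) (i mod p) * dp_trunc p N (\<lambda>k. g (Suc k)) (i div p)"
proof -
  have "[0..<Suc N] = 0 # map Suc [0..<N]" by (simp add: map_Suc_upt upt_conv_Cons)
  then show ?thesis unfolding dp_trunc_def by (simp add: digit_Suc o_def digit_def[of p i 0])
qed

lemma dp_trunc_Suc_highest:
  assumes "p > 0"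
  shows "dp_trunc p (Suc N) g i = dp_trunc p N g (i mod p ^ N) * divpow p (g N) (i div p ^ N mod p)"
proof -
  have digits: "map (\<lambda>k. divpow p (g k) (digit p i k)) [0..<N] =
      map (\<lambda>k. divpow p (g k) (digit p (i mod p ^ N) k)) [0..<N]"
    using digit_mod_power[OF _ assms] by (intro map_cong) auto
  have "dp_trunc p (Suc N) g i =
      prod_list (map (\<lambda>k. divpow p (g k) (digit p i k)) [0..<N]) * divpow p (g N) (digit p i N)"
    by (simp add: dp_trunc_def)
  also have "\<dots> = dp_trunc p N g (i mod p ^ N) * divpow p (g N) (digit p i N)"
    by (simp only: digits dp_trunc_def)
  finally show ?thesis by (simp add: digit_def)
qed

lemma dp_trunc_Suc_highest_digit:
  assumes "r < p ^ N" "q < p"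
  shows "dp_trunc p (Suc N) g (q * p ^ N + r) = dp_trunc p N g r * divpow p (g N) q"
  using dp_trunc_Suc_highest[of p N g "q * p ^ N + r"] assms by simp

lemma mult_add_less_power_Suc_iff:
  assumes "y < (p::nat)"
  shows "p * x + y < p ^ Suc N \<longleftrightarrow> x < p ^ N"
proof
  assume "p * x + y < p ^ Suc N"
  then show "x < p ^ N" by (metis add_lessD1 mult_less_cancel1 power_Suc)
next
  assume "x < p ^ N"
  have "p * x + y < p * (x + 1)" using assms by simp
  also have "\<dots> \<le> p * p ^ N" using \<open>x < p ^ N\<close> by (intro mult_left_mono) auto
  finally show "p * x + y < p ^ Suc N" by simp
qed

lemma commute_dp_trunc:
  "(\<forall>k<N. x * g k = g k * x) \<Longrightarrow> x * dp_trunc p N g i = dp_trunc p N g i * x"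
  unfolding dp_trunc_def by (intro commute_prod_list) (auto intro: commute_divpow)

lemma derivation_dp_trunc_eq_0:
  "derivation D \<Longrightarrow> \<forall>k<N. D (g k) = 0 \<Longrightarrow> D (dp_trunc p N g i) = 0"
  unfolding dp_trunc_def by (intro derivation_prod_list_eq_0) (auto intro: derivation_divpow_eq_0)

lemma dp_trunc_Suc_mult:
  assumes "\<forall>k<Suc N. \<forall>l<Suc N. g k * g l = g l * g k"
  shows "dp_trunc p (Suc N) g i * dp_trunc p (Suc N) g j =
    (divpow p (g 0) (i mod p) * divpow p (g 0) (j mod p)) *
    (dp_trunc p N (\<lambda>k. g (Suc k)) (i div p) * dp_trunc p N (\<lambda>k. g (Suc k)) (j div p))"
proof -
  let ?a = "divpow p (g 0) (i mod p)" and ?c = "divpow p (g 0) (j mod p)"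
  let ?x = "dp_trunc p N (\<lambda>k. g (Suc k)) (i div p)" and ?y = "dp_trunc p N (\<lambda>k. g (Suc k)) (j div p)"
  have "dp_trunc p (Suc N) g i * dp_trunc p (Suc N) g j = ?a * ((?x * ?c) * ?y)"
    unfolding dp_trunc_Suc_lowest by (simp only: mult.assoc)
  also have "?x * ?c = ?c * ?x"
    using assms by (intro commute_dp_trunc[symmetric] allI impI commute_divpow) auto
  finally show ?thesis by (simp only: mult.assoc)
qed

lemma below_pow_truncate:
  assumes "1 < p"
  obtains N where "\<forall>k<N. enat k < dd" "\<And>x. x \<le> m \<Longrightarrow> below_pow p dd x \<longleftrightarrow> x < p ^ N"
proof (cases dd)
  case (enat N)
  then show ?thesis by (intro that) (auto simp: below_pow_def)
next
  case infinity
  have "x < p ^ m" if "x \<le> m" for x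
    using that power_gt_expt[of p m] assms by simp
  then show ?thesis using infinity by (intro that[of m]) (auto simp: below_pow_def)
qed

lemma below_pow_mono: "below_pow p dd i \<Longrightarrow> j \<le> i \<Longrightarrow> below_pow p dd j"
  by (cases dd) (auto simp: below_pow_def)

lemma index_set_mono:
  assumes "\<alpha> \<in> index_set p n d" "\<forall>\<nu>. \<beta> \<nu> \<le> \<alpha> \<nu>"
  shows "\<beta> \<in> index_set p n d"
  using assms unfolding index_set_def multi_idx_def
  by (auto intro: below_pow_mono) (metis le_zero_eq)

lemma foldr_funpow_0:
  "\<forall>x\<in>set L. \<alpha> x = 0 \<Longrightarrow> foldr (\<lambda>\<nu> f. (\<delta> \<nu> ^^ \<alpha> \<nu>) \<circ> f) L h = h"
  by (induction L) auto

lemma multi_iter_unit: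
  assumes "\<nu> < n"
  shows "multi_iter n \<delta> (\<lambda>x. if x = \<nu> then 1 else 0) = \<delta> \<nu>"
proof -
  have "[0..<n] = [0..<\<nu>] @ \<nu> # [Suc \<nu>..<n]"
    using assms upt_add_eq_append[of 0 \<nu> "n - \<nu>"] upt_conv_Cons[OF assms] by simp
  then show ?thesis unfolding multi_iter_def by (simp add: foldr_funpow_0)
qed

lemma dp_multi_unit:
  assumes "\<mu> < n"
  shows "dp_multi p n g (\<lambda>\<nu>. if \<nu> = \<mu> then i else 0) = dp_elem p (g \<mu>) i"
  unfolding dp_multi_def using assms by (subst prod_list_map_single[of _ \<mu>]) (auto simp: dp_elem_def)

section \<open>Divided powers in characteristic p\<close>

context
  fixes p :: nat
  assumes prime: "prime p" and char: "of_nat p = (0::'a::ring_1)"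
begin

lemma p_gt_1: "1 < p"
  using prime by (rule prime_gt_1_nat)

lemma p_pos: "0 < p"
  using p_gt_1 by simp

lemma divpow_0: "divpow p (y::'a) 0 = 1" and divpow_1: "divpow p (y::'a) 1 = y"
  using of_nat_cong_char[OF char fp_inv_cong[OF prime, of 1]] p_gt_1
  by (simp_all add: divpow_def)

lemma divpow_mult:
  assumes "a + b < p"
  shows "divpow p (y::'a) a * divpow p y b = of_nat ((a + b) choose b) * divpow p y (a + b)"
proof -
  have "divpow p y a * divpow p y b = of_nat (((a + b) choose b) * fp_inv p (fact (a + b))) * y ^ (a + b)"
    unfolding divpow_mult_divpow using of_nat_cong_char[OF char fp_inv_fact_add_cong[OF prime assms]] by simp
  then show ?thesis unfolding divpow_def by (simp add: mult.assoc)
qed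

lemma divpow_mult_eq_0:
  assumes "p \<le> a + b" "(y::'a) ^ p = 0"
  shows "divpow p y a * divpow p y b = 0"
proof -
  have "y ^ (a + b) = y ^ p * y ^ (a + b - p)" using assms(1) by (simp flip: power_add)
  then show ?thesis using assms(2) by (simp add: divpow_mult_divpow)
qed

lemma derivation_divpow:
  assumes D: "derivation D" and c: "(y::'a) * D y = D y * y" and q: "0 < q" "q < p"
  shows "D (divpow p y q) = divpow p y (q - 1) * D y"
proof -
  obtain q' where q': "q = Suc q'" using q by (cases q) auto
  have "D (divpow p y q) = of_nat (fp_inv p (fact q)) * (of_nat q * y ^ q' * D y)"
    unfolding divpow_def using D derivation_power[OF D c, of q'] q'
    by (simp add: derivation_mult derivation_of_nat)
  also have "\<dots> = of_nat (fp_inv p (fact q) * q) * y ^ q' * D y"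
    by (simp add: mult.assoc)
  also have "\<dots> = divpow p y (q - 1) * D y"
    using of_nat_cong_char[OF char fp_inv_fact_mult_cong[OF prime q]] q' by (simp add: divpow_def)
  finally show ?thesis .
qed

lemma power_prime_eq_0:
  assumes "(y::'a) * divpow p y (p - 1) = 0"
  shows "y ^ p = 0"
proof -
  let ?u = "fp_inv p (fact (p - 1))"
  have "y * divpow p y (p - 1) = of_nat ?u * y ^ p"
    unfolding divpow_def using p_pos by (cases p) (simp_all add: mult.assoc mult_of_nat_commute)
  moreover have "(of_nat (fact (p - 1) * ?u) :: 'a) = 1"
    using of_nat_cong_char[OF char fp_inv_fact_cong[OF prime, of "p - 1"]] p_pos by simp
  then have "y ^ p = of_nat (fact (p - 1)) * (of_nat ?u * y ^ p)"
    by (simp flip: mult.assoc)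
  ultimately show ?thesis using assms by simp
qed

lemma dp_trunc_0_index: "dp_trunc p N (g::nat \<Rightarrow> 'a) 0 = 1"
  unfolding dp_trunc_def digit_def by (induction N) (simp_all add: divpow_0)

lemma dp_trunc_eq:
  assumes "i < p ^ N" "N \<le> M"
  shows "dp_trunc p M (g::nat \<Rightarrow> 'a) i = dp_trunc p N g i"
  using assms(2)
proof (induction M)
  case (Suc M)
  show ?case
  proof (cases "N = Suc M")
    case False
    then have "N \<le> M" using Suc by simp
    moreover have "p ^ N \<le> p ^ M" using \<open>N \<le> M\<close> p_pos by (simp add: power_increasing)
    ultimately have "i < p ^ M" using assms(1) by linarith
    then show ?thesis using Suc \<open>N \<le> M\<close> dp_trunc_Suc_highest[OF p_pos, of M g i] by (simp add: divpow_0)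
  qed simp
qed simp

lemma dp_elem_eq_dp_trunc:
  assumes "i < p ^ N"
  shows "dp_elem p (g::nat \<Rightarrow> 'a) i = dp_trunc p N g i"
proof -
  have "dp_elem p g i = dp_trunc p i g i" by (simp add: dp_elem_def dp_trunc_def)
  moreover have "i < p ^ i" using power_gt_expt[of p i] p_gt_1 by simp
  ultimately show ?thesis
    using dp_trunc_eq[OF assms, of i g] dp_trunc_eq[of i i N g] by (cases "N \<le> i") auto
qed

lemma dp_trunc_mult:
  assumes "\<forall>k<N. \<forall>l<N. (g::nat \<Rightarrow> 'a) k * g l = g l * g k" "\<forall>k<N. g k ^ p = 0"
    and "i < p ^ N" "j < p ^ N"
  shows "dp_trunc p N g i * dp_trunc p N g j =
    of_nat ((i + j) choose j) * (if i + j < p ^ N then dp_trunc p N g (i + j) else 0)"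
  using assms
proof (induction N arbitrary: g i j)
  case (Suc N)
  define h where "h = (\<lambda>k. g (Suc k))"
  define a r b s where "a = i div p" "r = i mod p" "b = j div p" "s = j mod p"
  have i: "i = p * a + r" and j: "j = p * b + s" and rs: "r < p" "s < p"
    unfolding a_r_b_s_def using p_pos by simp_all
  have ab: "a < p ^ N" "b < p ^ N"
    using Suc.prems(3,4) unfolding a_r_b_s_def by (simp_all add: less_mult_imp_div_less mult.commute)
  have IH: "dp_trunc p N h a * dp_trunc p N h b =
      of_nat ((a + b) choose b) * (if a + b < p ^ N then dp_trunc p N h (a + b) else 0)"
    using Suc.prems by (intro Suc.IH ab) (auto simp: h_def)
  have split: "dp_trunc p (Suc N) g i * dp_trunc p (Suc N) g j =
      (divpow p (g 0) r * divpow p (g 0) s) * (dp_trunc p N h a * dp_trunc p N h b)"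
    unfolding a_r_b_s_def h_def using Suc.prems(1) by (rule dp_trunc_Suc_mult)
  have binomial: "(of_nat ((i + j) choose j) :: 'a) =
      (if r + s < p then of_nat ((a + b) choose b) * of_nat ((r + s) choose s) else 0)"
    using of_nat_cong_char[OF char binomial_add_digits_cong[OF prime rs, of a b]] unfolding i j by simp
  show ?case
  proof (cases "r + s < p")
    case True
    have ij: "i + j = p * (a + b) + (r + s)" using i j by (simp add: algebra_simps)
    have high: "dp_trunc p (Suc N) g (i + j) = divpow p (g 0) (r + s) * dp_trunc p N h (a + b)"
      using dp_trunc_Suc_lowest[of p N g "i + j"] True unfolding ij by (simp add: h_def)
    have range: "i + j < p ^ Suc N \<longleftrightarrow> a + b < p ^ N"
      unfolding ij using True by (rule mult_add_less_power_Suc_iff)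
    have "dp_trunc p (Suc N) g i * dp_trunc p (Suc N) g j =
        (of_nat ((r + s) choose s) * divpow p (g 0) (r + s)) *
        (of_nat ((a + b) choose b) * (if a + b < p ^ N then dp_trunc p N h (a + b) else 0))"
      unfolding split IH divpow_mult[OF True] ..
    also have "\<dots> = (of_nat ((a + b) choose b) * of_nat ((r + s) choose s)) *
        (if a + b < p ^ N then divpow p (g 0) (r + s) * dp_trunc p N h (a + b) else 0)"
      by (cases "a + b < p ^ N") (simp_all add: mult.assoc, metis mult.assoc mult_of_nat_commute)
    finally show ?thesis unfolding binomial high range using True by simp
  next
    case False
    then show ?thesis
      unfolding split binomial using divpow_mult_eq_0[of r s "g 0"] Suc.prems(2) by simp
  qed
qed simp

lemma dp_trunc_mult_top_eq_0:
  assumes "\<forall>k<N. \<forall>l<N. (g::nat \<Rightarrow> 'a) k * g l = g l * g k" "\<forall>k<N. g k ^ p = 0"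
    and "0 < r" "r < p ^ N"
  shows "dp_trunc p N g r * dp_trunc p N g (p ^ N - 1) = 0"
proof -
  have "\<not> r + (p ^ N - 1) < p ^ N" using assms(3) by linarith
  then show ?thesis
    using dp_trunc_mult[OF assms(1,2,4), of "p ^ N - 1"] p_pos by (simp del: One_nat_def)
qed

lemma derivation_dp_trunc:
  assumes D: "derivation D"
    and "\<forall>k<N. \<forall>l<N. (g::nat \<Rightarrow> 'a) k * g l = g l * g k" "\<forall>k<N. g k ^ p = 0"
    and "\<forall>k<N. D (g k) = dp_trunc p k g (p ^ k - 1)"
    and "i < p ^ N"
  shows "D (dp_trunc p N g i) = (if i = 0 then 0 else dp_trunc p N g (i - 1))"
  using assms(2-)
proof (induction N arbitrary: i)
  case 0
  then show ?case using D by (simp add: derivation_1)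
next
  case (Suc N)
  let ?E = "dp_trunc p N g" and ?top = "dp_trunc p N g (p ^ N - 1)"
  define r q where "r = i mod p ^ N" "q = i div p ^ N"
  have r: "r < p ^ N" and q: "q < p" and i: "i = q * p ^ N + r"
    using Suc.prems(4) p_pos unfolding r_q_def by (simp_all add: div_less_iff_less_mult mult.commute)
  have IH: "D (?E x) = (if x = 0 then 0 else ?E (x - 1))" if "x < p ^ N" for x
    using Suc.prems that by (intro Suc.IH) auto
  have commute_divpow_E: "divpow p (g N) m * ?E x = ?E x * divpow p (g N) m" for m x
    using Suc.prems(1) by (intro commute_dp_trunc) (auto intro!: commute_divpow[symmetric])
  have D_g: "D (g N) = ?top" using Suc.prems(3) by simp
  then have "g N * D (g N) = D (g N) * g N"
    using Suc.prems(1) by (simp add: commute_dp_trunc)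
  then have D_divpow: "D (divpow p (g N) q) = (if q = 0 then 0 else divpow p (g N) (q - 1) * ?top)"
    using derivation_divpow[OF D, of "g N" q] D_g q by (auto simp: divpow_0 derivation_1[OF D])
  have expand: "D (dp_trunc p (Suc N) g i) = D (?E r) * divpow p (g N) q + ?E r * D (divpow p (g N) q)"
    unfolding i dp_trunc_Suc_highest_digit[OF r q] using D by (simp add: derivation_mult)
  consider (low) "r \<noteq> 0" | (high) "r = 0" "q \<noteq> 0" | (zero) "i = 0" using i by auto
  then show ?case
  proof cases
    case low
    have "?E r * ?top = 0"
      using Suc.prems(1,2) low r by (intro dp_trunc_mult_top_eq_0) auto
    then have "?E r * D (divpow p (g N) q) = 0"
      unfolding D_divpow by (simp add: mult.assoc commute_divpow_E flip: mult.assoc[of "?E r"])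
    moreover have "i - 1 = q * p ^ N + (r - 1)" and "i \<noteq> 0" using i low by simp_all
    ultimately show ?thesis
      using expand IH[OF r] dp_trunc_Suc_highest_digit[where r = "r - 1" and N = N and q = q and g = g] low r q by simp
  next
    case high
    have "i - 1 = (q - 1) * p ^ N + (p ^ N - 1)" using i high p_pos
      by (cases q) (auto simp: algebra_simps)
    then show ?thesis
      using expand IH[OF r] D_divpow dp_trunc_Suc_highest_digit[where r = "p ^ N - 1" and N = N and q = "q - 1" and g = g] high i q p_pos
      by (simp add: dp_trunc_0_index commute_divpow_E)
  next
    case zero
    then have "q = 0" "r = 0" using i p_pos by simp_all
    then show ?thesis using expand IH[OF r] D_divpow zero by simp
  qed
qed

lemma commute_dp_elem:
  assumes "\<forall>k. enat k < dd \<longrightarrow> x * G k = G k * (x::'a)" "below_pow p dd i"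
  shows "x * dp_elem p G i = dp_elem p G i * x"
proof -
  obtain N where "\<forall>k<N. enat k < dd" "\<And>x. x \<le> i \<Longrightarrow> below_pow p dd x \<longleftrightarrow> x < p ^ N"
    using below_pow_truncate[OF p_gt_1, of dd i] by metis
  then have "\<forall>k<N. enat k < dd" "i < p ^ N" using assms(2) by auto
  then show ?thesis
    unfolding dp_elem_eq_dp_trunc[OF \<open>i < p ^ N\<close>] using assms(1) by (intro commute_dp_trunc) auto
qed

lemma derivation_dp_elem_eq_0:
  assumes "derivation D" "\<forall>k. enat k < dd \<longrightarrow> D (G k) = (0::'a)" "below_pow p dd i"
  shows "D (dp_elem p G i) = 0"
proof -
  obtain N where "\<forall>k<N. enat k < dd" "\<And>x. x \<le> i \<Longrightarrow> below_pow p dd x \<longleftrightarrow> x < p ^ N"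
    using below_pow_truncate[OF p_gt_1, of dd i] by metis
  then have "\<forall>k<N. enat k < dd" "i < p ^ N" using assms(3) by auto
  then show ?thesis
    unfolding dp_elem_eq_dp_trunc[OF \<open>i < p ^ N\<close>] using assms(1,2) by (intro derivation_dp_trunc_eq_0) auto
qed

lemma dp_elem_mult:
  assumes "\<forall>k l. enat k < dd \<longrightarrow> enat l < dd \<longrightarrow> G k * G l = G l * (G k :: 'a)"
    and "\<forall>k. enat k < dd \<longrightarrow> G k ^ p = 0"
    and "below_pow p dd i" "below_pow p dd j"
  shows "dp_elem p G i * dp_elem p G j =
    of_nat ((i + j) choose j) * (if below_pow p dd (i + j) then dp_elem p G (i + j) else 0)"
proof -
  obtain N where N: "\<forall>k<N. enat k < dd" "\<And>x. x \<le> i + j \<Longrightarrow> below_pow p dd x \<longleftrightarrow> x < p ^ N"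
    using below_pow_truncate[OF p_gt_1, of dd "i + j"] by metis
  have ij: "i < p ^ N" "j < p ^ N" using N(2) assms(3,4) by auto
  have "\<forall>k<N. \<forall>l<N. G k * G l = G l * G k" "\<forall>k<N. G k ^ p = 0"
    using assms(1,2) N(1) by auto
  then show ?thesis
    using dp_trunc_mult[OF _ _ ij] N(2)[of "i + j"] dp_elem_eq_dp_trunc[of "i + j" N G]
    unfolding dp_elem_eq_dp_trunc[OF ij(1)] dp_elem_eq_dp_trunc[OF ij(2)] by auto
qed

lemma derivation_dp_elem:
  assumes "derivation D"
    and "\<forall>k l. enat k < dd \<longrightarrow> enat l < dd \<longrightarrow> G k * G l = G l * (G k :: 'a)"
    and "\<forall>k. enat k < dd \<longrightarrow> G k ^ p = 0"
    and "\<forall>k. enat k < dd \<longrightarrow> D (G k) = dp_elem p G (p ^ k - 1)"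
    and "below_pow p dd i"
  shows "D (dp_elem p G i) = (if i = 0 then 0 else dp_elem p G (i - 1))"
proof -
  obtain N where "\<forall>k<N. enat k < dd" "\<And>x. x \<le> i \<Longrightarrow> below_pow p dd x \<longleftrightarrow> x < p ^ N"
    using below_pow_truncate[OF p_gt_1, of dd i] by metis
  then have N: "\<forall>k<N. enat k < dd" "i < p ^ N" using assms(5) by auto
  have "p ^ k - 1 < p ^ k" for k using p_pos by simp
  then have "\<forall>k<N. D (G k) = dp_trunc p k G (p ^ k - 1)"
    using assms(4) N(1) dp_elem_eq_dp_trunc by auto
  moreover have "\<forall>k<N. \<forall>l<N. G k * G l = G l * G k" "\<forall>k<N. G k ^ p = 0"
    using assms(2,3) N(1) by auto
  moreover have "i - 1 < p ^ N" using N(2) by simp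
  ultimately show ?thesis
    using derivation_dp_trunc[OF assms(1) _ _ _ N(2)] dp_elem_eq_dp_trunc[of "i - 1" N G]
    unfolding dp_elem_eq_dp_trunc[OF N(2)] by auto
qed

lemma dp_elem_digit_power:
  assumes "c < p"
  shows "dp_elem p (G :: nat \<Rightarrow> 'a) (c * p ^ k) = divpow p (G k) c"
proof -
  have small: "c * p ^ k < p ^ Suc k" using assms p_pos by simp
  show ?thesis
    unfolding dp_elem_eq_dp_trunc[OF small] dp_trunc_Suc_highest[OF p_pos] using assms p_pos
    by (simp add: dp_trunc_0_index)
qed

section \<open>The descent conditions\<close>

lemma unit_index_in_index_set:
  assumes "\<mu> < n" "enat k < d \<mu>" "c < p"
  shows "(\<lambda>\<nu>. if \<nu> = \<mu> then c * p ^ k else 0) \<in> index_set p n d"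
proof -
  have "below_pow p (d \<mu>) (c * p ^ k)"
  proof (cases "d \<mu>")
    case (enat m)
    have "c * p ^ k < p ^ Suc k" using assms p_pos by simp
    also have "\<dots> \<le> p ^ m" using enat assms(2) p_pos by (intro power_increasing) auto
    finally show ?thesis using enat by (simp add: below_pow_def)
  qed (simp add: below_pow_def)
  moreover have "below_pow p dd 0" for dd using p_pos by (cases dd) (auto simp: below_pow_def)
  ultimately show ?thesis using assms unfolding index_set_def multi_idx_def by auto
qed

lemma dp_multi_unit_digit:
  assumes "\<mu> < n" "c < p"
  shows "dp_multi p n g (\<lambda>\<nu>. if \<nu> = \<mu> then c * p ^ k else 0) = divpow p (g \<mu> k :: 'a) c"
  using assms by (simp add: dp_multi_unit dp_elem_digit_power)

lemma iterative_descent_imp_derivation_generator: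
  assumes descent: "iterative_descent n (index_set p n d) \<delta> (dp_multi p n g)"
    and "\<nu> < n" "\<mu> < n" "enat k < d \<mu>"
  shows "\<delta> \<nu> (g \<mu> k :: 'a) = (if \<nu> = \<mu> then dp_elem p (g \<mu>) (p ^ k - 1) else 0)"
proof -
  let ?e = "\<lambda>x. if x = \<nu> then 1 else (0::nat)" and ?b = "\<lambda>x. if x = \<mu> then 1 * p ^ k else 0"
  have "?e \<in> multi_idx n" using assms(2) unfolding multi_idx_def by auto
  moreover have "?b \<in> index_set p n d"
    using unit_index_in_index_set[where \<mu>=\<mu> and n=n and k=k and d=d and c=1, OF assms(3,4) p_gt_1] .
  ultimately have "multi_iter n \<delta> ?e (dp_multi p n g ?b) =
      (if \<forall>x<n. ?e x \<le> ?b x then dp_multi p n g (\<lambda>x. ?b x - ?e x) else 0)"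
    using descent unfolding iterative_descent_def by blast
  moreover have "multi_iter n \<delta> ?e (dp_multi p n g ?b) = \<delta> \<nu> (g \<mu> k)"
    unfolding multi_iter_unit[OF assms(2)] using dp_multi_unit_digit[OF assms(3) p_gt_1] divpow_1 by simp
  ultimately have step: "\<delta> \<nu> (g \<mu> k) =
      (if \<forall>x<n. ?e x \<le> ?b x then dp_multi p n g (\<lambda>x. ?b x - ?e x) else 0)"
    by simp
  show ?thesis
  proof (cases "\<nu> = \<mu>")
    case True
    then have "(\<lambda>x. ?b x - ?e x) = (\<lambda>x. if x = \<mu> then p ^ k - 1 else 0)" by auto
    moreover have "\<forall>x<n. ?e x \<le> ?b x" using True p_pos by auto
    ultimately have "\<delta> \<nu> (g \<mu> k) = dp_multi p n g (\<lambda>x. if x = \<mu> then p ^ k - 1 else 0)"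
      using step by simp
    then show ?thesis unfolding dp_multi_unit[OF assms(3)] using True by simp
  next
    case False
    then have outside: "\<not> (\<forall>x<n. ?e x \<le> ?b x)" using assms(2) by auto
    show ?thesis using step[unfolded if_not_P[OF outside]] False by simp
  qed
qed

lemma iterative_descent_imp_generator_nilpotent:
  assumes descent: "iterative_descent n (index_set p n d) \<delta> (dp_multi p n g)"
    and "\<mu> < n" "enat k < d \<mu>"
  shows "(g \<mu> k :: 'a) ^ p = 0"
proof -
  let ?a = "\<lambda>x. if x = \<mu> then 1 * p ^ k else 0" and ?b = "\<lambda>x. if x = \<mu> then (p - 1) * p ^ k else 0"
  have "?a \<in> index_set p n d" "?b \<in> index_set p n d"
    using unit_index_in_index_set[where \<mu>=\<mu> and n=n and k=k and d=d, OF assms(2,3)]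
      p_gt_1 by simp_all
  then have "dp_multi p n g ?a * dp_multi p n g ?b = of_nat (\<Prod>x<n. (?a x + ?b x) choose ?b x) *
      (if (\<lambda>x. ?a x + ?b x) \<in> index_set p n d then dp_multi p n g (\<lambda>x. ?a x + ?b x) else 0)"
    using descent unfolding iterative_descent_def by blast
  moreover have "(\<Prod>x<n. (?a x + ?b x) choose ?b x) = (p ^ Suc k) choose ((p - 1) * p ^ k)"
  proof -
    have "p ^ k + (p - 1) * p ^ k = p ^ Suc k" using p_pos by (cases p) auto
    then have "(\<Prod>x<n. (?a x + ?b x) choose ?b x) = (\<Prod>x<n. if x = \<mu> then (p ^ Suc k) choose ((p - 1) * p ^ k) else 1)"
      by (intro prod.cong) auto
    then show ?thesis using assms(2) by simp
  qed
  moreover have "(of_nat ((p ^ Suc k) choose ((p - 1) * p ^ k)) :: 'a) = 0"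
    using prime_dvd_binomial_prime_power[OF prime, of k] char by (auto simp: dvd_def)
  ultimately have "g \<mu> k * divpow p (g \<mu> k) (p - 1) = 0"
    using dp_multi_unit_digit[OF assms(2) p_gt_1, of g k] dp_multi_unit_digit[OF assms(2), of "p - 1" g k]
      divpow_1 p_pos by simp
  then show ?thesis by (rule power_prime_eq_0)
qed

context
  fixes n :: nat and \<delta> :: "nat \<Rightarrow> 'a \<Rightarrow> 'a" and d :: "nat \<Rightarrow> enat" and g :: "nat \<Rightarrow> nat \<Rightarrow> 'a"
  assumes derivations: "\<forall>\<nu><n. derivation (\<delta> \<nu>)"
    and generators_commute: "\<forall>\<nu><n. \<forall>\<mu><n. \<forall>k l. enat k < d \<nu> \<longrightarrow> enat l < d \<mu> \<longrightarrow>
      g \<nu> k * g \<mu> l = g \<mu> l * g \<nu> k"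
    and derivation_generator: "\<forall>\<nu><n. \<forall>\<mu><n. \<forall>k. enat k < d \<mu> \<longrightarrow>
      \<delta> \<nu> (g \<mu> k) = (if \<nu> = \<mu> then dp_elem p (g \<mu>) (p ^ k - 1) else 0)"
    and generator_nilpotent: "\<forall>\<mu><n. \<forall>k. enat k < d \<mu> \<longrightarrow> g \<mu> k ^ p = 0"
begin

lemma commute_dp_elem_dp_elem:
  assumes "\<nu> < n" "\<mu> < n" "below_pow p (d \<nu>) i" "below_pow p (d \<mu>) j"
  shows "dp_elem p (g \<nu>) i * dp_elem p (g \<mu>) j = dp_elem p (g \<mu>) j * dp_elem p (g \<nu>) i"
proof -
  have "g \<mu> l * dp_elem p (g \<nu>) i = dp_elem p (g \<nu>) i * g \<mu> l" if "enat l < d \<mu>" for l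
    using generators_commute assms that by (intro commute_dp_elem) auto
  then show ?thesis using assms by (intro commute_dp_elem) auto
qed

lemma dp_multi_mult:
  assumes "\<alpha> \<in> index_set p n d" "\<beta> \<in> index_set p n d"
  shows "dp_multi p n g \<alpha> * dp_multi p n g \<beta> =
    of_nat (\<Prod>\<nu><n. (\<alpha> \<nu> + \<beta> \<nu>) choose \<beta> \<nu>) *
    (if (\<lambda>\<nu>. \<alpha> \<nu> + \<beta> \<nu>) \<in> index_set p n d then dp_multi p n g (\<lambda>\<nu>. \<alpha> \<nu> + \<beta> \<nu>) else 0)"
proof -
  have below: "\<forall>\<nu><n. below_pow p (d \<nu>) (\<alpha> \<nu>)" "\<forall>\<nu><n. below_pow p (d \<nu>) (\<beta> \<nu>)"
    using assms by (auto simp: index_set_def)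
  have "dp_multi p n g \<alpha> * dp_multi p n g \<beta> =
      prod_list (map (\<lambda>\<nu>. dp_elem p (g \<nu>) (\<alpha> \<nu>) * dp_elem p (g \<nu>) (\<beta> \<nu>)) [0..<n])"
    unfolding dp_multi_def using below by (intro prod_list_map_mult) (auto intro!: commute_dp_elem_dp_elem)
  also have "\<dots> = prod_list (map (\<lambda>\<nu>. of_nat ((\<alpha> \<nu> + \<beta> \<nu>) choose \<beta> \<nu>) *
      (if below_pow p (d \<nu>) (\<alpha> \<nu> + \<beta> \<nu>) then dp_elem p (g \<nu>) (\<alpha> \<nu> + \<beta> \<nu>) else 0)) [0..<n])"
    using generators_commute generator_nilpotent below by (intro map_cong arg_cong[where f=prod_list] refl dp_elem_mult) auto
  also have "\<dots> = of_nat (prod_list (map (\<lambda>\<nu>. (\<alpha> \<nu> + \<beta> \<nu>) choose \<beta> \<nu>) [0..<n])) *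
      (if \<forall>\<nu>\<in>set [0..<n]. below_pow p (d \<nu>) (\<alpha> \<nu> + \<beta> \<nu>)
       then prod_list (map (\<lambda>\<nu>. dp_elem p (g \<nu>) (\<alpha> \<nu> + \<beta> \<nu>)) [0..<n]) else 0)"
    by (simp only: prod_list_map_of_nat_mult prod_list_map_if_0)
  also have "(\<forall>\<nu>\<in>set [0..<n]. below_pow p (d \<nu>) (\<alpha> \<nu> + \<beta> \<nu>)) \<longleftrightarrow> (\<lambda>\<nu>. \<alpha> \<nu> + \<beta> \<nu>) \<in> index_set p n d"
    using assms by (auto simp: index_set_def multi_idx_def)
  finally show ?thesis by (simp add: prod_lessThan_eq_prod_list dp_multi_def)
qed

lemma derivation_dp_multi:
  assumes "\<nu> < n" "\<alpha> \<in> index_set p n d"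
  shows "\<delta> \<nu> (dp_multi p n g \<alpha>) = (if \<alpha> \<nu> = 0 then 0 else dp_multi p n g (\<alpha>(\<nu> := \<alpha> \<nu> - 1)))"
proof -
  have D: "derivation (\<delta> \<nu>)" using derivations assms(1) by simp
  have below: "\<forall>\<mu><n. below_pow p (d \<mu>) (\<alpha> \<mu>)" using assms(2) by (auto simp: index_set_def)
  have "\<delta> \<nu> (dp_multi p n g \<alpha>) = prod_list (map (\<lambda>\<mu>. if \<mu> = \<nu> then \<delta> \<nu> (dp_elem p (g \<nu>) (\<alpha> \<nu>))
      else dp_elem p (g \<mu>) (\<alpha> \<mu>)) [0..<n])"
    unfolding dp_multi_def using derivation_generator assms(1) below
    by (intro derivation_prod_list_single[OF D]) (auto intro!: derivation_dp_elem_eq_0[OF D])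
  also have "\<delta> \<nu> (dp_elem p (g \<nu>) (\<alpha> \<nu>)) = (if \<alpha> \<nu> = 0 then 0 else dp_elem p (g \<nu>) (\<alpha> \<nu> - 1))"
    using assms(1) generators_commute generator_nilpotent derivation_generator below
    by (intro derivation_dp_elem[OF D]) auto
  finally have expand: "\<delta> \<nu> (dp_multi p n g \<alpha>) = prod_list (map (\<lambda>\<mu>. if \<mu> = \<nu>
      then (if \<alpha> \<nu> = 0 then 0 else dp_elem p (g \<nu>) (\<alpha> \<nu> - 1)) else dp_elem p (g \<mu>) (\<alpha> \<mu>)) [0..<n])" .
  show ?thesis
  proof (cases "\<alpha> \<nu> = 0")
    case True
    then show ?thesis unfolding expand using assms(1) by (auto intro!: prod_list_0 image_eqI[of _ _ \<nu>])
  next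
    case False
    have "prod_list (map (\<lambda>\<mu>. if \<mu> = \<nu> then dp_elem p (g \<nu>) (\<alpha> \<nu> - 1) else dp_elem p (g \<mu>) (\<alpha> \<mu>)) [0..<n])
        = dp_multi p n g (\<alpha>(\<nu> := \<alpha> \<nu> - 1))"
      unfolding dp_multi_def by (intro arg_cong[where f=prod_list] map_cong) auto
    then show ?thesis using expand False by simp
  qed
qed

lemma funpow_derivation_dp_multi:
  assumes "\<nu> < n" "\<alpha> \<in> index_set p n d"
  shows "(\<delta> \<nu> ^^ m) (dp_multi p n g \<alpha>) =
    (if m \<le> \<alpha> \<nu> then dp_multi p n g (\<alpha>(\<nu> := \<alpha> \<nu> - m)) else 0)"
proof (induction m)
  case (Suc m)
  have D: "derivation (\<delta> \<nu>)" using derivations assms(1) by simp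
  show ?case
  proof (cases "m \<le> \<alpha> \<nu>")
    case True
    have "\<alpha>(\<nu> := \<alpha> \<nu> - m) \<in> index_set p n d" using assms(2) by (rule index_set_mono) auto
    moreover have "(\<alpha>(\<nu> := \<alpha> \<nu> - m))(\<nu> := \<alpha> \<nu> - m - 1) = \<alpha>(\<nu> := \<alpha> \<nu> - Suc m)" by simp
    ultimately show ?thesis using Suc True derivation_dp_multi[OF assms(1)] by auto
  next
    case False
    then show ?thesis using Suc derivation_0[OF D] by simp
  qed
qed simp

lemma foldr_funpow_derivation_dp_multi:
  assumes "set L \<subseteq> {..<n}" "distinct L" "\<beta> \<in> index_set p n d"
  shows "foldr (\<lambda>\<nu> f. (\<delta> \<nu> ^^ \<alpha> \<nu>) \<circ> f) L id (dp_multi p n g \<beta>) =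
    (if \<forall>\<nu>\<in>set L. \<alpha> \<nu> \<le> \<beta> \<nu>
     then dp_multi p n g (\<lambda>\<mu>. if \<mu> \<in> set L then \<beta> \<mu> - \<alpha> \<mu> else \<beta> \<mu>) else 0)"
  using assms(1,2)
proof (induction L)
  case (Cons a L)
  then have a: "a < n" "a \<notin> set L" by auto
  show ?case
  proof (cases "\<forall>\<nu>\<in>set L. \<alpha> \<nu> \<le> \<beta> \<nu>")
    case True
    let ?\<beta> = "\<lambda>\<mu>. if \<mu> \<in> set L then \<beta> \<mu> - \<alpha> \<mu> else \<beta> \<mu>"
    have "?\<beta> \<in> index_set p n d" using assms(3) by (rule index_set_mono) auto
    moreover have "?\<beta>(a := ?\<beta> a - \<alpha> a) = (\<lambda>\<mu>. if \<mu> \<in> set (a # L) then \<beta> \<mu> - \<alpha> \<mu> else \<beta> \<mu>)"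
      using a by auto
    ultimately show ?thesis
      using Cons True funpow_derivation_dp_multi[OF a(1)] a by auto
  next
    case False
    then show ?thesis using Cons derivation_funpow_0 derivations by auto
  qed
qed simp

lemma iterative_descent_dp_multi: "iterative_descent n (index_set p n d) \<delta> (dp_multi p n g)"
  unfolding iterative_descent_def
proof (intro conjI ballI)
  show "dp_multi p n g (\<lambda>_. 0) = 1"
    unfolding dp_multi_def by (induction n) (auto simp: dp_elem_def)
next
  fix \<alpha> \<beta> assume \<alpha>: "\<alpha> \<in> multi_idx n" and \<beta>: "\<beta> \<in> index_set p n d"
  have "multi_iter n \<delta> \<alpha> (dp_multi p n g \<beta>) = (if \<forall>\<nu>\<in>set [0..<n]. \<alpha> \<nu> \<le> \<beta> \<nu>
      then dp_multi p n g (\<lambda>\<mu>. if \<mu> \<in> set [0..<n] then \<beta> \<mu> - \<alpha> \<mu> else \<beta> \<mu>) else 0)"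
    unfolding multi_iter_def using \<beta> by (intro foldr_funpow_derivation_dp_multi) auto
  moreover have "(\<lambda>\<mu>. if \<mu> \<in> set [0..<n] then \<beta> \<mu> - \<alpha> \<mu> else \<beta> \<mu>) = (\<lambda>\<nu>. \<beta> \<nu> - \<alpha> \<nu>)"
    using \<alpha> \<beta> by (auto simp: index_set_def multi_idx_def)
  moreover have "(\<forall>\<nu>\<in>set [0..<n]. \<alpha> \<nu> \<le> \<beta> \<nu>) \<longleftrightarrow> (\<forall>\<nu><n. \<alpha> \<nu> \<le> \<beta> \<nu>)" by auto
  ultimately show "multi_iter n \<delta> \<alpha> (dp_multi p n g \<beta>) =
      (if \<forall>\<nu><n. \<alpha> \<nu> \<le> \<beta> \<nu> then dp_multi p n g (\<lambda>\<nu>. \<beta> \<nu> - \<alpha> \<nu>) else 0)"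
    by (simp only:)
qed (rule dp_multi_mult)

end

end

theorem corollary2p8:
  fixes p n :: nat
    and \<delta> :: "nat \<Rightarrow> 'a::ring_1 \<Rightarrow> 'a"
    and d :: "nat \<Rightarrow> enat"
    and g :: "nat \<Rightarrow> nat \<Rightarrow> 'a"
  assumes "prime p"
    and "of_nat p = (0::'a)"
    and "\<forall>\<nu><n. derivation (\<delta> \<nu>)"
    and "\<forall>\<nu><n. \<forall>\<mu><n. \<delta> \<nu> \<circ> \<delta> \<mu> = \<delta> \<mu> \<circ> \<delta> \<nu>"
    and "\<forall>\<nu><n. \<forall>\<mu><n. \<forall>k l. enat k < d \<nu> \<longrightarrow> enat l < d \<mu> \<longrightarrow>
           g \<nu> k * g \<mu> l = g \<mu> l * g \<nu> k"
  shows "iterative_descent n (index_set p n d) \<delta> (dp_multi p n g) \<longleftrightarrow>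
    ((\<forall>\<nu><n. \<forall>\<mu><n. \<forall>k. enat k < d \<mu> \<longrightarrow>
        \<delta> \<nu> (g \<mu> k) = (if \<nu> = \<mu> then dp_elem p (g \<mu>) (p ^ k - 1) else 0)) \<and>
     (\<forall>\<mu><n. \<forall>k. enat k < d \<mu> \<longrightarrow> g \<mu> k ^ p = 0))"
  using iterative_descent_imp_derivation_generator[OF assms(1,2)]
    iterative_descent_imp_generator_nilpotent[OF assms(1,2)]
    iterative_descent_dp_multi[OF assms(1,2,3,5)]
  by blast

end
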